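(* Let $J\in\mathcal{D}(X)$, let $\ell$ be a positive integer, let $x\in X$, and let $\tilde u\in\tilde U(T^{\ell-1}J,x)$. Then $(T^\ell J)(f(x,\tilde u))\le(T^\ell J)(x)$.
   Context: Setting: $X$ (state space) and $U$ (control space) are sets; for each $x\in X$, $U(x)\subset U$ is nonempty; $f:X\times U\to X$; the stage cost $g$ satisfies $0\le g(x,u)\le\infty$ for all $x\in X$, $u\in U(x)$. $\mathcal{E}^+(X)$ denotes the set of all functions $J:X\to[0,\infty]$. The Bellman operator is $(TJ)(x)=\inf_{u\in U(x)}\{g(x,u)+J(f(x,u))\}$; $T^k$ is its $k$-fold composition, $T^0J=J$. The region of decreasing is $\mathcal{D}(X)=\{J\in\mathcal{E}^+(X): (TJ)(x)\le J(x)\ \forall x\in X\}$. For $J\in\mathcal{E}^+(X)$ and $x\in X$, $\tilde U(J,x)=\arg\min_{u\in U(x)}\{g(x,u)+J(f(x,u))\}$. Standing assumption: for every $J\in\mathcal{E}^+(X)$ and every $x\in X$, the infimum defining $(TJ)(x)$ is attained. *)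

theory Defs
  imports "HOL-Library.Extended_Nonnegative_Real"
begin

definition bellman :: "('x \<Rightarrow> 'u set) \<Rightarrow> ('x \<Rightarrow> 'u \<Rightarrow> 'x) \<Rightarrow> ('x \<Rightarrow> 'u \<Rightarrow> ennreal)
    \<Rightarrow> ('x \<Rightarrow> ennreal) \<Rightarrow> ('x \<Rightarrow> ennreal)" where
  "bellman Uc f g J x = (INF u\<in>Uc x. g x u + J (f x u))"

definition region_decreasing :: "('x \<Rightarrow> 'u set) \<Rightarrow> ('x \<Rightarrow> 'u \<Rightarrow> 'x) \<Rightarrow> ('x \<Rightarrow> 'u \<Rightarrow> ennreal)
    \<Rightarrow> ('x \<Rightarrow> ennreal) set" where
  "region_decreasing Uc f g = {J. \<forall>x. bellman Uc f g J x \<le> J x}"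

definition Utilde :: "('x \<Rightarrow> 'u set) \<Rightarrow> ('x \<Rightarrow> 'u \<Rightarrow> 'x) \<Rightarrow> ('x \<Rightarrow> 'u \<Rightarrow> ennreal)
    \<Rightarrow> ('x \<Rightarrow> ennreal) \<Rightarrow> 'x \<Rightarrow> 'u set" where
  "Utilde Uc f g J x = {u \<in> Uc x. \<forall>v\<in>Uc x. g x u + J (f x u) \<le> g x v + J (f x v)}"

end

theory Submission
  imports Defs
begin

(* Proof idea: T is monotone, so the region of decreasing is invariant under T and
   K = T^(l-1) J satisfies T K <= K. For a minimiser u of g x u + K (f x u) we have
   (T K) x = g x u + K (f x u) >= K (f x u) >= (T K) (f x u), since g >= 0. *)

lemma bellman_mono:
  assumes "\<And>y. J1 y \<le> J2 y"
  shows "bellman Uc f g J1 x \<le> bellman Uc f g J2 x"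
  unfolding bellman_def
  by (rule INF_mono) (use assms add_left_mono in blast)

lemma bellman_in_region_decreasing:
  assumes "J \<in> region_decreasing Uc f g"
  shows "bellman Uc f g J \<in> region_decreasing Uc f g"
  using assms bellman_mono[of "bellman Uc f g J" J Uc f g]
  by (simp add: region_decreasing_def)

lemma funpow_bellman_in_region_decreasing:
  assumes "J \<in> region_decreasing Uc f g"
  shows "(bellman Uc f g ^^ k) J \<in> region_decreasing Uc f g"
  by (induction k) (simp_all add: assms bellman_in_region_decreasing)

lemma bellman_eq_at_Utilde:
  assumes "u \<in> Utilde Uc f g K x"
  shows "bellman Uc f g K x = g x u + K (f x u)"
proof -
  have u: "u \<in> Uc x" and min: "\<And>v. v \<in> Uc x \<Longrightarrow> g x u + K (f x u) \<le> g x v + K (f x v)"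
    using assms by (auto simp: Utilde_def)
  show ?thesis
    unfolding bellman_def
    by (rule antisym) (auto intro: INF_lower2[OF u] INF_greatest min)
qed

lemma bellman_Utilde_successor_le:
  assumes K_dec: "K \<in> region_decreasing Uc f g"
    and u: "u \<in> Utilde Uc f g K x"
  shows "bellman Uc f g K (f x u) \<le> bellman Uc f g K x"
proof -
  have "bellman Uc f g K (f x u) \<le> K (f x u)"
    using K_dec by (simp add: region_decreasing_def)
  also have "\<dots> \<le> g x u + K (f x u)"
    by simp
  also have "\<dots> = bellman Uc f g K x"
    using u by (simp add: bellman_eq_at_Utilde)
  finally show ?thesis .
qed

theorem corollary3:
  fixes Uc :: "'x \<Rightarrow> 'u set" and f :: "'x \<Rightarrow> 'u \<Rightarrow> 'x" and g :: "'x \<Rightarrow> 'u \<Rightarrow> ennreal"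
    and J :: "'x \<Rightarrow> ennreal" and l :: nat and x :: 'x and ut :: 'u
  assumes nonempty: "\<And>y. Uc y \<noteq> {}"
    and attained: "\<And>(K :: 'x \<Rightarrow> ennreal) y. \<exists>u\<in>Uc y. g y u + K (f y u) = bellman Uc f g K y"
    and J_dec: "J \<in> region_decreasing Uc f g"
    and l_pos: "l \<ge> 1"
    and ut: "ut \<in> Utilde Uc f g ((bellman Uc f g ^^ (l - 1)) J) x"
  shows "(bellman Uc f g ^^ l) J (f x ut) \<le> (bellman Uc f g ^^ l) J x"
proof -
  obtain k where l: "l = Suc k"
    using l_pos by (cases l) auto
  have "(bellman Uc f g ^^ k) J \<in> region_decreasing Uc f g"
    using J_dec by (rule funpow_bellman_in_region_decreasing)
  from bellman_Utilde_successor_le[OF this, of ut x] show ?thesis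
    using ut by (simp add: l)
qed

end
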